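(* Let $V = k[[t]]$ be the formal power series ring over a field $k$, and set $R = k[[t^3, t^8, t^{13}]]$ and $S = k[[t^3, t^5]]$, subrings of $V$. Then $R$ is strictly closed in $S$, but $R$ is not strictly closed in $V$.
   Context: For an extension of commutative rings $R \subseteq S$, the strict closure of $R$ in $S$ is $R^* = \{\alpha \in S \mid \alpha\otimes 1 = 1\otimes \alpha \text{ in } S\otimes_R S\}$; $R$ is strictly closed in $S$ if $R=R^*$. *)

theory Defs
  imports "HOL-Computational_Algebra.Formal_Power_Series"
begin

text \<open>Elements of the free abelian group on S \<times> S are represented as integer-valued
  functions on pairs (all elements produced below have finite support).
  The tensor product S \<otimes>_R S is the quotient of this free abelian group by the
  subgroup generated by the bilinearity and R-balancedness relations.\<close>

definition basis_elt :: "'a \<times> 'a \<Rightarrow> ('a \<times> 'a \<Rightarrow> int)" where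
  "basis_elt p = (\<lambda>q. if q = p then 1 else 0)"

inductive_set tensor_rel :: "'a::comm_ring_1 set \<Rightarrow> 'a set \<Rightarrow> ('a \<times> 'a \<Rightarrow> int) set"
  for R :: "'a set" and S :: "'a set" where
  zero: "(\<lambda>_. 0) \<in> tensor_rel R S"
| add_left: "\<lbrakk>s \<in> S; s' \<in> S; u \<in> S\<rbrakk> \<Longrightarrow>
     (\<lambda>q. basis_elt (s + s', u) q - basis_elt (s, u) q - basis_elt (s', u) q) \<in> tensor_rel R S"
| add_right: "\<lbrakk>s \<in> S; u \<in> S; u' \<in> S\<rbrakk> \<Longrightarrow>
     (\<lambda>q. basis_elt (s, u + u') q - basis_elt (s, u) q - basis_elt (s, u') q) \<in> tensor_rel R S"
| balanced: "\<lbrakk>r \<in> R; s \<in> S; u \<in> S\<rbrakk> \<Longrightarrow>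
     (\<lambda>q. basis_elt (r * s, u) q - basis_elt (s, r * u) q) \<in> tensor_rel R S"
| plus: "\<lbrakk>x \<in> tensor_rel R S; y \<in> tensor_rel R S\<rbrakk> \<Longrightarrow> (\<lambda>q. x q + y q) \<in> tensor_rel R S"
| neg: "x \<in> tensor_rel R S \<Longrightarrow> (\<lambda>q. - x q) \<in> tensor_rel R S"

text \<open>\<alpha> \<otimes> 1 = 1 \<otimes> \<alpha> in S \<otimes>_R S\<close>
definition tensor_sym :: "'a::comm_ring_1 set \<Rightarrow> 'a set \<Rightarrow> 'a \<Rightarrow> bool" where
  "tensor_sym R S \<alpha> \<longleftrightarrow> (\<lambda>q. basis_elt (\<alpha>, 1) q - basis_elt (1, \<alpha>) q) \<in> tensor_rel R S"

definition strict_closure :: "'a::comm_ring_1 set \<Rightarrow> 'a set \<Rightarrow> 'a set" where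
  "strict_closure R S = {\<alpha> \<in> S. tensor_sym R S \<alpha>}"

definition strictly_closed :: "'a::comm_ring_1 set \<Rightarrow> 'a set \<Rightarrow> bool" where
  "strictly_closed R S \<longleftrightarrow> strict_closure R S = R"

text \<open>k[[t^{a_1},...,t^{a_m}]] is the (t-adically closed) subring of k[[t]] of power series
  whose support lies in the numerical semigroup generated by a_1,...,a_m.\<close>
definition semigroup_fps :: "nat set \<Rightarrow> 'a::field fps set" where
  "semigroup_fps G = {f. \<forall>n. fps_nth f n \<noteq> 0 \<longrightarrow> n \<in> G}"

definition R_3_8_13 :: "'a::field fps set" where
  "R_3_8_13 = semigroup_fps {3*a + 8*b + 13*c | a b c. True}"

definition S_3_5 :: "'a::field fps set" where
  "S_3_5 = semigroup_fps {3*a + 5*b | a b. True}"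

end

theory Submission
  imports Defs
begin

text \<open>Every R-balanced biadditive form \<open>B\<close> on \<open>S \<times> S\<close> factors through \<open>S \<otimes>\<^sub>R S\<close>, so
  \<open>\<alpha> \<otimes> 1 = 1 \<otimes> \<alpha>\<close> forces \<open>B (\<alpha>, 1) = B (1, \<alpha>)\<close>. For the semigroup rings at hand the
  exponents 5 and 10 are the only ones of \<open>\<langle>3, 5\<rangle>\<close> missing from \<open>\<langle>3, 8, 13\<rangle>\<close>, and neither
  can be written as a nonzero element of \<open>\<langle>3, 8, 13\<rangle>\<close> plus an element of \<open>\<langle>3, 5\<rangle>\<close>.
  Hence \<open>B (f, g) = f\<^sub>n g\<^sub>0\<close> is balanced for \<open>n \<in> {5, 10}\<close>, and it separates \<open>\<alpha> \<otimes> 1\<close> from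
  \<open>1 \<otimes> \<alpha>\<close> as soon as \<open>\<alpha>\<^sub>n \<noteq> 0\<close>. Over \<open>k[[t]]\<close> the element \<open>t\<^sup>2\<close> becomes available and
  \<open>t\<^sup>10 \<otimes> 1 = t\<^sup>2 \<otimes> t\<^sup>8 = t\<^sup>5 \<otimes> t\<^sup>5 = t\<^sup>8 \<otimes> t\<^sup>2 = 1 \<otimes> t\<^sup>10\<close>, moving only \<open>t\<^sup>3\<close> and \<open>t\<^sup>8\<close>
  across the tensor sign, although \<open>t\<^sup>10 \<notin> R\<close>.\<close>

definition tensor_eval :: "('a \<times> 'a \<Rightarrow> 'b::comm_ring_1) \<Rightarrow> ('a \<times> 'a \<Rightarrow> int) \<Rightarrow> 'b" where
  "tensor_eval B x = (\<Sum>q | x q \<noteq> 0. of_int (x q) * B q)"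

lemma tensor_eval_superset:
  assumes "finite A" "{q. x q \<noteq> 0} \<subseteq> A"
  shows "tensor_eval B x = (\<Sum>q\<in>A. of_int (x q) * B q)"
  unfolding tensor_eval_def by (rule sum.mono_neutral_left) (use assms in auto)

lemma tensor_eval_add:
  assumes "finite {q. x q \<noteq> 0}" "finite {q. y q \<noteq> 0}"
  shows "tensor_eval B (\<lambda>q. x q + y q) = tensor_eval B x + tensor_eval B y"
proof -
  let ?A = "{q. x q \<noteq> 0} \<union> {q. y q \<noteq> 0}"
  have "finite ?A" using assms by simp
  then have "tensor_eval B (\<lambda>q. x q + y q) = (\<Sum>q\<in>?A. of_int (x q) * B q) + (\<Sum>q\<in>?A. of_int (y q) * B q)"
    by (subst tensor_eval_superset[of ?A]) (auto simp: sum.distrib distrib_right)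
  also have "\<dots> = tensor_eval B x + tensor_eval B y"
    using \<open>finite ?A\<close> by (simp add: tensor_eval_superset[of ?A])
  finally show ?thesis .
qed

lemma tensor_eval_uminus: "tensor_eval B (\<lambda>q. - x q) = - tensor_eval B x"
  unfolding tensor_eval_def by (simp add: sum_negf)

lemma tensor_eval_diff:
  assumes "finite {q. x q \<noteq> 0}" "finite {q. y q \<noteq> 0}"
  shows "tensor_eval B (\<lambda>q. x q - y q) = tensor_eval B x - tensor_eval B y"
  using tensor_eval_add[of x "\<lambda>q. - y q" B] tensor_eval_uminus[of B y] assms by simp

lemma finite_support_basis_elt: "finite {q. basis_elt p q \<noteq> 0}"
  by (rule finite_subset[of _ "{p}"]) (auto simp: basis_elt_def)

lemma tensor_eval_basis_elt: "tensor_eval B (basis_elt p) = B p"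
proof -
  have "{q. basis_elt p q \<noteq> 0} = {p}" by (auto simp: basis_elt_def)
  then show ?thesis unfolding tensor_eval_def by (simp add: basis_elt_def)
qed

lemma finite_support_add:
  "finite {q. x q \<noteq> 0} \<Longrightarrow> finite {q. y q \<noteq> 0} \<Longrightarrow> finite {q. (x q :: int) + y q \<noteq> 0}"
  by (rule finite_subset[of _ "{q. x q \<noteq> 0} \<union> {q. y q \<noteq> 0}"]) auto

lemma finite_support_diff:
  "finite {q. x q \<noteq> 0} \<Longrightarrow> finite {q. y q \<noteq> 0} \<Longrightarrow> finite {q. (x q :: int) - y q \<noteq> 0}"
  by (rule finite_subset[of _ "{q. x q \<noteq> 0} \<union> {q. y q \<noteq> 0}"]) auto

lemma finite_support_basis_elt_diff: "finite {q. basis_elt p q - basis_elt p' q \<noteq> 0}"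
  by (intro finite_support_diff finite_support_basis_elt)

lemma tensor_eval_basis_elt_diff:
  "tensor_eval B (\<lambda>q. basis_elt p q - basis_elt p' q) = B p - B p'"
  by (simp only: tensor_eval_diff finite_support_basis_elt tensor_eval_basis_elt)

lemma finite_support_basis_elt_diff_diff:
  "finite {q. basis_elt p q - basis_elt p' q - basis_elt p'' q \<noteq> 0}"
  by (intro finite_support_diff finite_support_basis_elt)

lemma tensor_eval_basis_elt_diff_diff:
  "tensor_eval B (\<lambda>q. basis_elt p q - basis_elt p' q - basis_elt p'' q) = B p - B p' - B p''"
  by (simp only: tensor_eval_diff finite_support_basis_elt_diff finite_support_basis_elt
      tensor_eval_basis_elt_diff tensor_eval_basis_elt)

definition balanced_biadditive ::
    "'a::comm_ring_1 set \<Rightarrow> 'a set \<Rightarrow> ('a \<times> 'a \<Rightarrow> 'b::ab_group_add) \<Rightarrow> bool" where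
  "balanced_biadditive R S B \<longleftrightarrow>
     (\<forall>s\<in>S. \<forall>s'\<in>S. \<forall>u\<in>S. B (s + s', u) = B (s, u) + B (s', u)) \<and>
     (\<forall>s\<in>S. \<forall>u\<in>S. \<forall>u'\<in>S. B (s, u + u') = B (s, u) + B (s, u')) \<and>
     (\<forall>r\<in>R. \<forall>s\<in>S. \<forall>u\<in>S. B (r * s, u) = B (s, r * u))"

lemma tensor_rel_tensor_eval_eq_0:
  assumes "x \<in> tensor_rel R S" and B: "balanced_biadditive R S B"
  shows "finite {q. x q \<noteq> 0} \<and> tensor_eval B x = 0"
  using assms(1)
proof (induction rule: tensor_rel.induct)
  case zero
  then show ?case by (simp add: tensor_eval_def)
next
  case (add_left s s' u)
  with B show ?case
    by (simp only: finite_support_basis_elt_diff_diff tensor_eval_basis_elt_diff_diff)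
      (simp add: balanced_biadditive_def)
next
  case (add_right s u u')
  with B show ?case
    by (simp only: finite_support_basis_elt_diff_diff tensor_eval_basis_elt_diff_diff)
      (simp add: balanced_biadditive_def)
next
  case (balanced r s u)
  with B show ?case
    by (simp only: finite_support_basis_elt_diff tensor_eval_basis_elt_diff)
      (simp add: balanced_biadditive_def)
next
  case (plus x y)
  then show ?case by (simp add: finite_support_add tensor_eval_add)
next
  case (neg x)
  then show ?case by (simp add: tensor_eval_uminus)
qed

definition pure_tensor_eq :: "'a::comm_ring_1 set \<Rightarrow> 'a set \<Rightarrow> 'a \<times> 'a \<Rightarrow> 'a \<times> 'a \<Rightarrow> bool" where
  "pure_tensor_eq R S p p' \<longleftrightarrow> (\<lambda>q. basis_elt p q - basis_elt p' q) \<in> tensor_rel R S"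

lemma tensor_sym_iff_pure_tensor_eq: "tensor_sym R S \<alpha> \<longleftrightarrow> pure_tensor_eq R S (\<alpha>, 1) (1, \<alpha>)"
  by (simp add: tensor_sym_def pure_tensor_eq_def)

lemma pure_tensor_eq_balanced:
  "r \<in> R \<Longrightarrow> s \<in> S \<Longrightarrow> u \<in> S \<Longrightarrow> pure_tensor_eq R S (r * s, u) (s, r * u)"
  unfolding pure_tensor_eq_def by (rule tensor_rel.balanced)

lemma pure_tensor_eq_sym: "pure_tensor_eq R S p p' \<Longrightarrow> pure_tensor_eq R S p' p"
  unfolding pure_tensor_eq_def by (drule tensor_rel.neg) simp

lemma pure_tensor_eq_trans [trans]:
  assumes "pure_tensor_eq R S p p'" "pure_tensor_eq R S p' p''"
  shows "pure_tensor_eq R S p p''"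
proof -
  have "(\<lambda>q. (basis_elt p q - basis_elt p' q) + (basis_elt p' q - basis_elt p'' q)) \<in> tensor_rel R S"
    using assms unfolding pure_tensor_eq_def by (rule tensor_rel.plus)
  then show ?thesis unfolding pure_tensor_eq_def by simp
qed

lemma pure_tensor_eq_imp_eq:
  fixes B :: "'a::comm_ring_1 \<times> 'a \<Rightarrow> 'b::comm_ring_1"
  assumes "pure_tensor_eq R S p p'" "balanced_biadditive R S B"
  shows "B p = B p'"
  using tensor_rel_tensor_eval_eq_0[OF assms[unfolded pure_tensor_eq_def]]
  by (simp add: tensor_eval_basis_elt_diff)

lemma subset_strict_closure:
  assumes "R \<subseteq> S" "1 \<in> S"
  shows "R \<subseteq> strict_closure R S"
proof
  fix r assume "r \<in> R"
  then have "pure_tensor_eq R S (r * 1, 1) (1, r * 1)"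
    using assms by (intro pure_tensor_eq_balanced) auto
  then show "r \<in> strict_closure R S"
    using \<open>r \<in> R\<close> assms by (simp add: strict_closure_def tensor_sym_iff_pure_tensor_eq subsetD)
qed

lemma tensor_sym_square:
  assumes "a \<in> R" "a * y \<in> R" "x \<in> S" "y \<in> S" "1 \<in> S" "y = a * x"
  shows "tensor_sym R S (y * y)"
proof -
  have "pure_tensor_eq R S ((a * y) * x, 1) (x, (a * y) * 1)"
    using assms by (intro pure_tensor_eq_balanced)
  then have "pure_tensor_eq R S (y * y, 1) (x, a * y)"
    using \<open>y = a * x\<close> by (simp add: ac_simps)
  also have "pure_tensor_eq R S (x, a * y) (y, y)"
    using pure_tensor_eq_balanced[of a R x S y] assms by (auto intro: pure_tensor_eq_sym)
  also have "pure_tensor_eq R S (y, y) (a * y, x)"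
    using pure_tensor_eq_balanced[of a R y S x] assms by (auto intro: pure_tensor_eq_sym)
  also have "pure_tensor_eq R S (a * y, x) (1, y * y)"
    using pure_tensor_eq_balanced[of "a * y" R 1 S x] assms by (simp add: ac_simps)
  finally show ?thesis by (simp add: tensor_sym_iff_pure_tensor_eq)
qed

lemma semigroup_fps_mono: "G \<subseteq> H \<Longrightarrow> semigroup_fps G \<subseteq> semigroup_fps H"
  by (auto simp: semigroup_fps_def)

lemma one_mem_semigroup_fps: "0 \<in> G \<Longrightarrow> 1 \<in> semigroup_fps G"
  by (simp add: semigroup_fps_def)

lemma fps_X_power_mem_semigroup_fps_iff: "fps_X ^ k \<in> semigroup_fps G \<longleftrightarrow> k \<in> G"
  by (auto simp: semigroup_fps_def fps_X_power_nth)

lemma fps_mult_nth_eq_if_gap: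
  assumes "\<And>i. 0 < i \<Longrightarrow> i \<le> n \<Longrightarrow> fps_nth f i * fps_nth g (n - i) = 0"
  shows "fps_nth (f * g) n = fps_nth f 0 * fps_nth g n"
proof -
  have "fps_nth (f * g) n = fps_nth f 0 * fps_nth g (n - 0) + (\<Sum>i=Suc 0..n. fps_nth f i * fps_nth g (n - i))"
    by (simp add: fps_mult_nth sum.atLeast_Suc_atMost)
  also have "(\<Sum>i=Suc 0..n. fps_nth f i * fps_nth g (n - i)) = 0"
    using assms by (intro sum.neutral) auto
  finally show ?thesis by simp
qed

lemma semigroup_fps_mult_nth_eq_if_gap:
  assumes "f \<in> semigroup_fps G" "g \<in> semigroup_fps H"
    and gap: "\<And>i j. i \<in> G \<Longrightarrow> j \<in> H \<Longrightarrow> i + j = n \<Longrightarrow> i = 0"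
  shows "fps_nth (f * g) n = fps_nth f 0 * fps_nth g n"
proof (rule fps_mult_nth_eq_if_gap)
  fix i assume "0 < i" "i \<le> n"
  then have "i \<notin> G \<or> n - i \<notin> H" using gap[of i "n - i"] by auto
  then show "fps_nth f i * fps_nth g (n - i) = 0"
    using assms(1,2) by (auto simp: semigroup_fps_def)
qed

lemma strictly_closed_semigroup_fps:
  assumes "G \<subseteq> H" "0 \<in> G"
    and gap: "\<And>n i j. n \<in> H \<Longrightarrow> n \<notin> G \<Longrightarrow> i \<in> G \<Longrightarrow> j \<in> H \<Longrightarrow> i + j = n \<Longrightarrow> i = 0"
  shows "strictly_closed (semigroup_fps G :: 'a::field fps set) (semigroup_fps H)"
proof -
  have "\<alpha> \<in> semigroup_fps G" if \<alpha>: "\<alpha> \<in> strict_closure (semigroup_fps G) (semigroup_fps H)"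
    for \<alpha> :: "'a fps"
  proof -
    have "fps_nth \<alpha> n = 0" if "n \<notin> G" for n
    proof (cases "n \<in> H")
      case True
      define B :: "'a fps \<times> 'a fps \<Rightarrow> 'a" where "B = (\<lambda>(f, g). fps_nth f n * fps_nth g 0)"
      have "balanced_biadditive (semigroup_fps G) (semigroup_fps H) B"
        using semigroup_fps_mult_nth_eq_if_gap[of _ G _ H n] gap[OF True \<open>n \<notin> G\<close>]
        by (auto simp: balanced_biadditive_def B_def algebra_simps)
      moreover have "pure_tensor_eq (semigroup_fps G) (semigroup_fps H) (\<alpha>, 1) (1, \<alpha>)"
        using \<alpha> by (simp add: strict_closure_def tensor_sym_iff_pure_tensor_eq)
      ultimately have "B (\<alpha>, 1) = B (1, \<alpha>)"
        by (intro pure_tensor_eq_imp_eq)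
      moreover have "n \<noteq> 0" using \<open>n \<notin> G\<close> \<open>0 \<in> G\<close> by metis
      ultimately show ?thesis by (simp add: B_def)
    next
      case False
      then show ?thesis using \<alpha> by (auto simp: strict_closure_def semigroup_fps_def)
    qed
    then show ?thesis by (auto simp: semigroup_fps_def)
  qed
  moreover have "semigroup_fps G \<subseteq> strict_closure (semigroup_fps G) (semigroup_fps H :: 'a fps set)"
    using assms by (intro subset_strict_closure semigroup_fps_mono one_mem_semigroup_fps) auto
  ultimately show ?thesis by (auto simp: strictly_closed_def)
qed

lemma mem_semigroup_3_8_13_iff:
  "(n::nat) \<in> {3*a + 8*b + 13*c | a b c. True} \<longleftrightarrow> n \<in> {0, 3, 6, 8, 9} \<or> 11 \<le> n"
proof
  assume "n \<in> {3*a + 8*b + 13*c | a b c. True}"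
  then obtain a b c where n: "n = 3*a + 8*b + 13*c" by blast
  show "n \<in> {0, 3, 6, 8, 9} \<or> 11 \<le> n"
  proof (cases "n \<le> 10")
    case True
    then have "c = 0" "b \<in> {0, 1}" "a \<in> {0, 1, 2, 3}" using n by auto
    then show ?thesis using n True by auto
  qed simp
next
  assume small_or_large: "n \<in> {0, 3, 6, 8, 9} \<or> 11 \<le> n"
  define q where "q = n div 3"
  have n: "n = 3 * q + n mod 3" "n mod 3 < 3" by (simp_all add: q_def)
  consider "n mod 3 = 0" | "n mod 3 = 2" "2 \<le> q" | "n mod 3 = 1" "4 \<le> q"
    using small_or_large n by fastforce
  then have "\<exists>a b c. n = 3*a + 8*b + 13*c"
  proof cases
    case 1
    with n have "n = 3*q + 8*0 + 13*0" by simp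
    then show ?thesis by blast
  next
    case 2
    with n have "n = 3*(q - 2) + 8*1 + 13*0" by simp
    then show ?thesis by blast
  next
    case 3
    with n have "n = 3*(q - 4) + 8*0 + 13*1" by simp
    then show ?thesis by blast
  qed
  then show "n \<in> {3*a + 8*b + 13*c | a b c. True}" by blast
qed

lemma mem_semigroup_3_5_iff:
  "(n::nat) \<in> {3*a + 5*b | a b. True} \<longleftrightarrow> n \<in> {0, 3, 5, 6} \<or> 8 \<le> n"
proof
  assume "n \<in> {3*a + 5*b | a b. True}"
  then obtain a b where n: "n = 3*a + 5*b" by blast
  show "n \<in> {0, 3, 5, 6} \<or> 8 \<le> n"
  proof (cases "n \<le> 7")
    case True
    then have "b \<in> {0, 1}" "a \<in> {0, 1, 2}" using n by auto
    then show ?thesis using n True by auto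
  qed simp
next
  assume small_or_large: "n \<in> {0, 3, 5, 6} \<or> 8 \<le> n"
  define q where "q = n div 3"
  have n: "n = 3 * q + n mod 3" "n mod 3 < 3" by (simp_all add: q_def)
  consider "n mod 3 = 0" | "n mod 3 = 2" "1 \<le> q" | "n mod 3 = 1" "3 \<le> q"
    using small_or_large n by fastforce
  then have "\<exists>a b. n = 3*a + 5*b"
  proof cases
    case 1
    with n have "n = 3*q + 5*0" by simp
    then show ?thesis by blast
  next
    case 2
    with n have "n = 3*(q - 1) + 5*1" by simp
    then show ?thesis by blast
  next
    case 3
    with n have "n = 3*(q - 3) + 5*2" by simp
    then show ?thesis by blast
  qed
  then show "n \<in> {3*a + 5*b | a b. True}" by blast
qed

lemma semigroup_3_8_13_subset_3_5:
  "({3*a + 8*b + 13*c | a b c. True} :: nat set) \<subseteq> {3*a + 5*b | a b. True}"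
proof
  fix n :: nat assume "n \<in> {3*a + 8*b + 13*c | a b c. True}"
  then obtain a b c :: nat where "n = 3*a + 8*b + 13*c" by blast
  then have "n = 3*(a + b + c) + 5*(b + 2*c)" by simp
  then show "n \<in> {3*a + 5*b | a b. True}" by blast
qed

lemma R_3_8_13_strictly_closed_in_S_3_5: "strictly_closed (R_3_8_13 :: 'a::field fps set) S_3_5"
  unfolding R_3_8_13_def S_3_5_def
proof (rule strictly_closed_semigroup_fps)
  show "{3*a + 8*b + 13*c | a b c. True} \<subseteq> {3*a + 5*b | a b :: nat. True}"
    by (fact semigroup_3_8_13_subset_3_5)
  show "0 \<in> {3*a + 8*b + 13*c | a b c :: nat. True}"
    unfolding mem_semigroup_3_8_13_iff by simp
next
  fix n i j :: nat
  assume "n \<in> {3*a + 5*b | a b. True}" "n \<notin> {3*a + 8*b + 13*c | a b c. True}"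
  then have "n = 5 \<or> n = 10"
    unfolding mem_semigroup_3_5_iff mem_semigroup_3_8_13_iff by auto
  moreover assume "i \<in> {3*a + 8*b + 13*c | a b c. True}" "j \<in> {3*a + 5*b | a b. True}" "i + j = n"
  ultimately show "i = 0"
    unfolding mem_semigroup_3_5_iff mem_semigroup_3_8_13_iff by auto
qed

lemma fps_X_power_10_in_strict_closure:
  "(fps_X ^ 10 :: 'a::field fps) \<in> strict_closure R_3_8_13 UNIV"
proof -
  have "tensor_sym (R_3_8_13 :: 'a fps set) UNIV (fps_X ^ 5 * fps_X ^ 5)"
  proof (rule tensor_sym_square)
    show "fps_X ^ 3 \<in> (R_3_8_13 :: 'a fps set)" "fps_X ^ 3 * fps_X ^ 5 \<in> (R_3_8_13 :: 'a fps set)"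
      unfolding R_3_8_13_def power_add[symmetric] fps_X_power_mem_semigroup_fps_iff
        mem_semigroup_3_8_13_iff by simp_all
    show "(fps_X :: 'a fps) ^ 5 = fps_X ^ 3 * fps_X ^ 2"
      by (simp flip: power_add)
  qed auto
  then show ?thesis by (simp add: strict_closure_def flip: power_add)
qed

lemma R_3_8_13_not_strictly_closed: "\<not> strictly_closed (R_3_8_13 :: 'a::field fps set) UNIV"
proof -
  have "(fps_X ^ 10 :: 'a fps) \<notin> R_3_8_13"
    unfolding R_3_8_13_def fps_X_power_mem_semigroup_fps_iff mem_semigroup_3_8_13_iff by simp
  then show ?thesis
    using fps_X_power_10_in_strict_closure by (auto simp: strictly_closed_def)
qed

theorem mainTheorem5:
  shows "strictly_closed (R_3_8_13 :: 'k::field fps set) S_3_5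
         \<and> \<not> strictly_closed (R_3_8_13 :: 'k::field fps set) UNIV"
  using R_3_8_13_strictly_closed_in_S_3_5 R_3_8_13_not_strictly_closed by blast

end
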